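(* Let $A$ be a one-dimensional integral domain. Every overring of $A$ that is finitely generated as an $A$-algebra, flat over $A$, and well-centered on $A$ is a localization of $A$.
   Context: An overring of $A$ is a subring of the field of fractions of $A$ containing $A$. $B$ is well-centered on $A$ if for each $b\in B$ there is a unit $u$ of $B$ with $ub\in A$. $B$ is a localization of $A$ if $B=S^{-1}A$ for a multiplicatively closed set $S$ of nonzero elements of $A$. *)

theory Defs
  imports Main
begin

text \<open>We work inside an ambient field K (a type of class field). A subring A of K
  whose field of fractions is all of K models an integral domain A with fraction field K.\<close>

definition subring :: "'k::field set \<Rightarrow> bool" where
  "subring R \<longleftrightarrow> 0 \<in> R \<and> 1 \<in> R \<and> (\<forall>x\<in>R. \<forall>y\<in>R. x + y \<in> R \<and> x * y \<in> R \<and> - x \<in> R)"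

definition is_fraction_field_of :: "'k::field set \<Rightarrow> bool" where
  "is_fraction_field_of A \<longleftrightarrow> (\<forall>x::'k. \<exists>a\<in>A. \<exists>b\<in>A. b \<noteq> 0 \<and> x = a / b)"

definition overring :: "'k::field set \<Rightarrow> 'k set \<Rightarrow> bool" where
  "overring A B \<longleftrightarrow> subring B \<and> A \<subseteq> B"

definition ideal_of :: "'k::field set \<Rightarrow> 'k set \<Rightarrow> bool" where
  "ideal_of A I \<longleftrightarrow> I \<subseteq> A \<and> 0 \<in> I \<and> (\<forall>x\<in>I. \<forall>y\<in>I. x + y \<in> I) \<and>
     (\<forall>a\<in>A. \<forall>x\<in>I. a * x \<in> I)"

definition prime_ideal_of :: "'k::field set \<Rightarrow> 'k set \<Rightarrow> bool" where
  "prime_ideal_of A P \<longleftrightarrow> ideal_of A P \<and> P \<noteq> A \<and>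
     (\<forall>x\<in>A. \<forall>y\<in>A. x * y \<in> P \<longrightarrow> x \<in> P \<or> y \<in> P)"

definition prime_chain_of_length :: "'k::field set \<Rightarrow> nat \<Rightarrow> bool" where
  "prime_chain_of_length A n \<longleftrightarrow> (\<exists>P :: nat \<Rightarrow> 'k set.
      (\<forall>i\<le>n. prime_ideal_of A (P i)) \<and> (\<forall>i<n. P i \<subset> P (Suc i)))"

definition krull_dim_eq :: "'k::field set \<Rightarrow> nat \<Rightarrow> bool" where
  "krull_dim_eq A n \<longleftrightarrow> prime_chain_of_length A n \<and> (\<forall>m>n. \<not> prime_chain_of_length A m)"

definition fin_gen_algebra :: "'k::field set \<Rightarrow> 'k set \<Rightarrow> bool" where
  "fin_gen_algebra A B \<longleftrightarrow> (\<exists>S. finite S \<and> S \<subseteq> B \<and>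
      B = \<Inter>{C. subring C \<and> A \<subseteq> C \<and> S \<subseteq> C})"

text \<open>Flatness of B over A, via the equational criterion of flatness.\<close>
definition flat_over :: "'k::field set \<Rightarrow> 'k set \<Rightarrow> bool" where
  "flat_over A B \<longleftrightarrow> (\<forall>n (a :: nat \<Rightarrow> 'k) (b :: nat \<Rightarrow> 'k).
      (\<forall>i<n. a i \<in> A \<and> b i \<in> B) \<and> (\<Sum>i<n. a i * b i) = 0 \<longrightarrow>
      (\<exists>m (c :: nat \<Rightarrow> 'k) (x :: nat \<Rightarrow> nat \<Rightarrow> 'k).
          (\<forall>j<m. c j \<in> B) \<and> (\<forall>i<n. \<forall>j<m. x i j \<in> A) \<and>
          (\<forall>i<n. b i = (\<Sum>j<m. x i j * c j)) \<and>
          (\<forall>j<m. (\<Sum>i<n. a i * x i j) = 0)))"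

definition unit_of :: "'k::field set \<Rightarrow> 'k \<Rightarrow> bool" where
  "unit_of B u \<longleftrightarrow> u \<in> B \<and> (\<exists>v\<in>B. u * v = 1)"

definition well_centered :: "'k::field set \<Rightarrow> 'k set \<Rightarrow> bool" where
  "well_centered A B \<longleftrightarrow> (\<forall>b\<in>B. \<exists>u. unit_of B u \<and> u * b \<in> A)"

definition is_localization :: "'k::field set \<Rightarrow> 'k set \<Rightarrow> bool" where
  "is_localization A B \<longleftrightarrow> (\<exists>S. S \<subseteq> A - {0} \<and> 1 \<in> S \<and> (\<forall>s\<in>S. \<forall>t\<in>S. s * t \<in> S) \<and>
      B = {a / s | a s. a \<in> A \<and> s \<in> S})"

end

theory Submission
  imports Defs
begin

text \<open>Write B = A[X] with X finite and let I = (A : X) be the ideal of common denominators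
  of X. Flatness makes the denominator ideal (A : b) of every b \<in> B extend to the unit ideal
  of B; consequently a prime P of A satisfies PB = B exactly when I \<subseteq> P. For a nonzero
  t \<in> I, dimension one forces (tB \<inter> A) + I = A, so 1 = l + j with l / t \<in> B and j \<in> I.
  Well-centeredness gives a unit u of B with u l / t \<in> A. Then l lies in no prime P with
  PB = B while u lies in all of them; this makes u an element of A, and every b \<in> B satisfies
  u^n b \<in> A for some n, i.e. B = A[1/u].\<close>

lemma
  assumes "subring R"
  shows subring_0: "0 \<in> R" and subring_1: "1 \<in> R"
    and subring_add: "x \<in> R \<Longrightarrow> y \<in> R \<Longrightarrow> x + y \<in> R"
    and subring_mult: "x \<in> R \<Longrightarrow> y \<in> R \<Longrightarrow> x * y \<in> R"
    and subring_uminus: "x \<in> R \<Longrightarrow> - x \<in> R"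
  using assms unfolding subring_def by auto

lemma subring_power: "subring R \<Longrightarrow> x \<in> R \<Longrightarrow> x ^ n \<in> R"
  by (induction n) (auto simp: subring_1 subring_mult)

lemma subring_prod: "finite F \<Longrightarrow> subring R \<Longrightarrow> (\<And>x. x \<in> F \<Longrightarrow> f x \<in> R) \<Longrightarrow> prod f F \<in> R"
  by (induction F rule: finite_induct) (auto simp: subring_1 subring_mult)

lemma
  assumes "ideal_of R I"
  shows ideal_subset: "I \<subseteq> R" and ideal_0: "0 \<in> I"
    and ideal_add: "x \<in> I \<Longrightarrow> y \<in> I \<Longrightarrow> x + y \<in> I"
    and ideal_mult: "r \<in> R \<Longrightarrow> x \<in> I \<Longrightarrow> r * x \<in> I"
    and ideal_mult_right: "x \<in> I \<Longrightarrow> r \<in> R \<Longrightarrow> x * r \<in> I"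
  using assms unfolding ideal_of_def by (auto simp: mult.commute[of x r])

lemma
  assumes "prime_ideal_of R P"
  shows prime_ideal_ideal: "ideal_of R P"
    and prime_ideal_mult_dest: "x \<in> R \<Longrightarrow> y \<in> R \<Longrightarrow> x * y \<in> P \<Longrightarrow> x \<in> P \<or> y \<in> P"
  using assms unfolding prime_ideal_of_def by auto

lemma prime_ideal_one_notin:
  assumes "prime_ideal_of R P"
  shows "1 \<notin> P"
proof
  assume "1 \<in> P"
  then have "a \<in> P" if "a \<in> R" for a
    using ideal_mult[OF prime_ideal_ideal[OF assms] that \<open>1 \<in> P\<close>] by simp
  then have "R \<subseteq> P" by blast
  then show False
    using assms ideal_subset[OF prime_ideal_ideal[OF assms]] unfolding prime_ideal_of_def by blast
qed

lemma prime_ideal_power_dest: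
  assumes "prime_ideal_of R P" "subring R" "d \<in> R" "d ^ n \<in> P"
  shows "d \<in> P"
  using assms(4)
proof (induction n)
  case 0
  then show ?case using prime_ideal_one_notin[OF assms(1)] by simp
next
  case (Suc n)
  then show ?case
    using prime_ideal_mult_dest[OF assms(1) assms(3) subring_power[OF assms(2,3)]] by auto
qed

lemma prod_notin_prime_ideal:
  assumes "prime_ideal_of R P" "subring R" "finite F" "\<And>x. x \<in> F \<Longrightarrow> f x \<in> R - P"
  shows "prod f F \<notin> P"
  using assms(3,4)
proof (induction F rule: finite_induct)
  case empty
  then show ?case using prime_ideal_one_notin[OF assms(1)] by simp
next
  case (insert x F)
  have "prod f F \<in> R" using subring_prod[OF insert.hyps(1) assms(2)] insert.prems by blast
  then show ?case
    using insert prime_ideal_mult_dest[OF assms(1), of "f x" "prod f F"] by auto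
qed

section \<open>Prime ideals avoiding a multiplicative set\<close>

definition ideal_sum :: "'k::field set \<Rightarrow> 'k set \<Rightarrow> 'k set" where
  "ideal_sum I J = {i + j | i j. i \<in> I \<and> j \<in> J}"

definition principal_ideal :: "'k::field set \<Rightarrow> 'k \<Rightarrow> 'k set" where
  "principal_ideal R x = {r * x | r. r \<in> R}"

lemma ideal_of_ideal_sum:
  assumes "ideal_of R I" "ideal_of R J" "subring R"
  shows "ideal_of R (ideal_sum I J)"
  unfolding ideal_of_def
proof (intro conjI ballI)
  show "ideal_sum I J \<subseteq> R"
    using assms by (auto simp: ideal_sum_def dest: ideal_subset intro: subring_add)
  show "0 \<in> ideal_sum I J"
    unfolding ideal_sum_def using ideal_0[OF assms(1)] ideal_0[OF assms(2)] by force
next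
  fix x y assume "x \<in> ideal_sum I J" "y \<in> ideal_sum I J"
  then obtain i j i' j' where "x = i + j" "y = i' + j'" "i \<in> I" "j \<in> J" "i' \<in> I" "j' \<in> J"
    unfolding ideal_sum_def by blast
  moreover have "i + j + (i' + j') = (i + i') + (j + j')" by (simp add: algebra_simps)
  ultimately show "x + y \<in> ideal_sum I J"
    unfolding ideal_sum_def using ideal_add assms(1,2) by blast
next
  fix r x assume "r \<in> R" "x \<in> ideal_sum I J"
  then obtain i j where "x = i + j" "i \<in> I" "j \<in> J" "r \<in> R"
    unfolding ideal_sum_def by blast
  moreover have "r * (i + j) = r * i + r * j" by (simp add: algebra_simps)
  ultimately show "r * x \<in> ideal_sum I J"
    unfolding ideal_sum_def using ideal_mult assms(1,2) by blast
qed

lemma ideal_sum_subset_left: "ideal_of R J \<Longrightarrow> I \<subseteq> ideal_sum I J"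
  unfolding ideal_sum_def by (force dest: ideal_0)

lemma ideal_sum_subset_right: "ideal_of R I \<Longrightarrow> J \<subseteq> ideal_sum I J"
  unfolding ideal_sum_def by (force dest: ideal_0)

lemma ideal_of_principal_ideal:
  assumes "subring R" "x \<in> R"
  shows "ideal_of R (principal_ideal R x)"
  unfolding ideal_of_def principal_ideal_def
proof (intro conjI ballI)
  show "{r * x |r. r \<in> R} \<subseteq> R" using assms subring_mult by blast
  show "0 \<in> {r * x |r. r \<in> R}" using subring_0[OF assms(1)] by force
next
  fix y z assume "y \<in> {r * x |r. r \<in> R}" "z \<in> {r * x |r. r \<in> R}"
  then obtain r s where "y = r * x" "z = s * x" "r \<in> R" "s \<in> R" by blast
  then show "y + z \<in> {r * x |r. r \<in> R}"
    using subring_add[OF assms(1)] by (force simp: distrib_right)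
next
  fix s y assume "s \<in> R" "y \<in> {r * x |r. r \<in> R}"
  then obtain r where "y = r * x" "r \<in> R" "s \<in> R" by blast
  then show "s * y \<in> {r * x |r. r \<in> R}"
    using subring_mult[OF assms(1)] by (force simp: mult.assoc)
qed

lemma mem_principal_ideal: "subring R \<Longrightarrow> x \<in> principal_ideal R x"
  unfolding principal_ideal_def using subring_1 by force

lemma ideal_of_Union_chain:
  assumes "C \<noteq> {}" "\<And>J. J \<in> C \<Longrightarrow> ideal_of R J" "subset.chain UNIV C"
  shows "ideal_of R (\<Union>C)"
  unfolding ideal_of_def
proof (intro conjI ballI)
  show "\<Union>C \<subseteq> R" using assms(2) ideal_subset by blast
  show "0 \<in> \<Union>C" using assms(1,2) ideal_0 by blast
next
  fix x y assume "x \<in> \<Union>C" "y \<in> \<Union>C"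
  then obtain J J' where "J \<in> C" "J' \<in> C" "x \<in> J" "y \<in> J'" by blast
  moreover have "J \<subseteq> J' \<or> J' \<subseteq> J"
    using assms(3) \<open>J \<in> C\<close> \<open>J' \<in> C\<close> unfolding subset_chain_def by blast
  ultimately show "x + y \<in> \<Union>C" using assms(2) ideal_add by blast
next
  fix r x assume "r \<in> R" "x \<in> \<Union>C"
  then show "r * x \<in> \<Union>C" using assms(2) ideal_mult by blast
qed

lemma prime_ideal_if_maximal_avoiding:
  assumes R: "subring R" and Q: "ideal_of R Q"
    and M: "M \<subseteq> R" "1 \<in> M" "\<forall>x\<in>M. \<forall>y\<in>M. x * y \<in> M" "Q \<inter> M = {}"
    and maximal: "\<And>x. x \<in> R \<Longrightarrow> x \<notin> Q \<Longrightarrow> ideal_sum Q (principal_ideal R x) \<inter> M \<noteq> {}"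
  shows "prime_ideal_of R Q"
  unfolding prime_ideal_of_def
proof (intro conjI ballI impI)
  show "Q \<noteq> R" using M by blast
next
  fix x y assume x: "x \<in> R" and y: "y \<in> R" and xy: "x * y \<in> Q"
  show "x \<in> Q \<or> y \<in> Q"
  proof (rule ccontr)
    assume "\<not> (x \<in> Q \<or> y \<in> Q)"
    then obtain q r q' r' where qr: "q \<in> Q" "r \<in> R" "q + r * x \<in> M"
      and qr': "q' \<in> Q" "r' \<in> R" "q' + r' * y \<in> M"
      using maximal x y unfolding ideal_sum_def principal_ideal_def by blast
    have "q' + r' * y \<in> R" using M(1) qr' by blast
    then have "q * (q' + r' * y) + (r * x) * q' + (r * r') * (x * y) \<in> Q"
      using Q R qr qr' x xy by (meson ideal_add ideal_mult ideal_mult_right subring_mult)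
    moreover have "(q + r * x) * (q' + r' * y) = q * (q' + r' * y) + (r * x) * q' + (r * r') * (x * y)"
      by (simp add: algebra_simps)
    moreover have "(q + r * x) * (q' + r' * y) \<in> M" using M(3) qr(3) qr'(3) by blast
    ultimately show False using M(4) by auto
  qed
qed fact

lemma prime_ideal_avoiding:
  assumes R: "subring R" and I: "ideal_of R I"
    and M: "M \<subseteq> R" "1 \<in> M" "\<forall>x\<in>M. \<forall>y\<in>M. x * y \<in> M" "I \<inter> M = {}"
  obtains Q where "prime_ideal_of R Q" "I \<subseteq> Q" "Q \<inter> M = {}"
proof -
  define S where "S = {J. ideal_of R J \<and> I \<subseteq> J \<and> J \<inter> M = {}}"
  have "\<Union>C \<in> S" if C: "C \<noteq> {}" "subset.chain S C" for C
  proof -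
    have "C \<subseteq> S" "subset.chain UNIV C" using C(2) unfolding subset_chain_def by auto
    then have "ideal_of R (\<Union>C)" using ideal_of_Union_chain[OF C(1)] unfolding S_def by blast
    moreover have "I \<subseteq> \<Union>C" "\<Union>C \<inter> M = {}" using \<open>C \<subseteq> S\<close> C(1) unfolding S_def by auto
    ultimately show ?thesis unfolding S_def by blast
  qed
  moreover have "I \<in> S" using I M(4) unfolding S_def by blast
  ultimately obtain Q where "Q \<in> S" and max: "\<forall>J\<in>S. Q \<subseteq> J \<longrightarrow> J = Q"
    using subset_Zorn_nonempty[of S] by blast
  then have Q: "ideal_of R Q" "I \<subseteq> Q" "Q \<inter> M = {}" unfolding S_def by auto
  have "ideal_sum Q (principal_ideal R x) \<inter> M \<noteq> {}" if x: "x \<in> R" "x \<notin> Q" for x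
  proof
    let ?Qx = "ideal_sum Q (principal_ideal R x)"
    assume "?Qx \<inter> M = {}"
    moreover have "ideal_of R ?Qx"
      using ideal_of_ideal_sum[OF Q(1) ideal_of_principal_ideal[OF R x(1)] R] .
    moreover have "Q \<subseteq> ?Qx"
      using ideal_sum_subset_left[OF ideal_of_principal_ideal[OF R x(1)]] .
    ultimately have "?Qx = Q" using max Q(2) unfolding S_def by blast
    moreover have "x \<in> ?Qx"
      using ideal_sum_subset_right[OF Q(1)] mem_principal_ideal[OF R] by blast
    ultimately show False using x(2) by blast
  qed
  then have "prime_ideal_of R Q"
    using prime_ideal_if_maximal_avoiding[OF R Q(1) M(1-3) Q(3)] by blast
  with Q show thesis using that by blast
qed

lemma proper_ideal_in_prime_ideal:
  assumes "subring R" "ideal_of R I" "1 \<notin> I"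
  obtains P where "prime_ideal_of R P" "I \<subseteq> P"
proof -
  have "{1} \<subseteq> R" "I \<inter> {1} = {}" using assms subring_1[OF assms(1)] by auto
  then show thesis using prime_ideal_avoiding[OF assms(1,2), of "{1}"] that by auto
qed

lemma ideal_of_Int:
  assumes "ideal_of B I" "subring A" "A \<subseteq> B"
  shows "ideal_of A (I \<inter> A)"
  using assms unfolding ideal_of_def subring_def by blast

lemma prime_ideal_of_Int:
  assumes "prime_ideal_of B Q" "subring A" "A \<subseteq> B"
  shows "prime_ideal_of A (Q \<inter> A)"
  using ideal_of_Int[OF prime_ideal_ideal[OF assms(1)] assms(2,3)] assms
    prime_ideal_one_notin[OF assms(1)] subring_1[OF assms(2)]
  unfolding prime_ideal_of_def by blast

section \<open>Denominator ideals in flat overrings\<close>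

definition denominators :: "'k::field set \<Rightarrow> 'k set \<Rightarrow> 'k set" where
  "denominators A X = {c \<in> A. \<forall>x\<in>X. c * x \<in> A}"

lemma ideal_of_denominators:
  assumes A: "subring A"
  shows "ideal_of A (denominators A X)"
  unfolding ideal_of_def
proof (intro conjI ballI)
  show "denominators A X \<subseteq> A" unfolding denominators_def by blast
  show "0 \<in> denominators A X" using subring_0[OF A] unfolding denominators_def by simp
next
  fix c c' assume "c \<in> denominators A X" "c' \<in> denominators A X"
  then show "c + c' \<in> denominators A X"
    using subring_add[OF A] unfolding denominators_def by (simp add: distrib_right)
next
  fix a c assume "a \<in> A" "c \<in> denominators A X"
  then show "a * c \<in> denominators A X"
    using subring_mult[OF A] unfolding denominators_def by (simp add: mult.assoc)
qed

lemma one_mem_denominators_iff: "subring A \<Longrightarrow> 1 \<in> denominators A {b} \<longleftrightarrow> b \<in> A"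
  unfolding denominators_def using subring_1[of A] by simp

lemma prod_mem_denominators:
  assumes A: "subring A" and X: "finite X" and f: "\<And>x. x \<in> X \<Longrightarrow> f x \<in> denominators A {x}"
  shows "prod f X \<in> denominators A X"
proof -
  have "prod f X * x \<in> A" if x: "x \<in> X" for x
  proof -
    have "prod f (X - {x}) \<in> A"
      using subring_prod[OF _ A] X f unfolding denominators_def by blast
    moreover have "f x * x \<in> A" using f[OF x] unfolding denominators_def by blast
    ultimately have "(f x * x) * prod f (X - {x}) \<in> A" using subring_mult[OF A] by blast
    then show ?thesis unfolding prod.remove[OF X x, of f] by (simp add: ac_simps)
  qed
  moreover have "prod f X \<in> A" using subring_prod[OF X A] f unfolding denominators_def by blast
  ultimately show ?thesis unfolding denominators_def by blast
qed

lemma exists_nonzero_denominator: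
  assumes "subring A" "is_fraction_field_of A" "finite X"
  obtains t where "t \<in> denominators A X" "t \<noteq> 0"
proof -
  have "\<exists>q. q \<in> denominators A {x} \<and> q \<noteq> 0" for x
  proof -
    obtain p q where "p \<in> A" "q \<in> A" "q \<noteq> 0" "x = p / q"
      using assms(2) unfolding is_fraction_field_of_def by blast
    then have "q \<in> denominators A {x}" unfolding denominators_def by simp
    then show ?thesis using \<open>q \<noteq> 0\<close> by blast
  qed
  then obtain g where g: "\<And>x. g x \<in> denominators A {x}" "\<And>x. g x \<noteq> 0" by metis
  then have "prod g X \<in> denominators A X" using prod_mem_denominators[OF assms(1,3)] by blast
  moreover have "prod g X \<noteq> 0" using assms(3) g(2) by simp
  ultimately show thesis using that by blast
qed

lemma denominators_subset_prime_ideal: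
  assumes A: "subring A" and P: "prime_ideal_of A P" and X: "finite X"
    and "denominators A X \<subseteq> P"
  shows "\<exists>x\<in>X. denominators A {x} \<subseteq> P"
proof (rule ccontr)
  assume "\<not> (\<exists>x\<in>X. denominators A {x} \<subseteq> P)"
  then have "\<forall>x\<in>X. \<exists>c. c \<in> denominators A {x} - P" by blast
  from bchoice[OF this] obtain f where f: "\<And>x. x \<in> X \<Longrightarrow> f x \<in> denominators A {x} - P"
    by blast
  then have "prod f X \<in> denominators A X" using prod_mem_denominators[OF A X] by blast
  moreover have "prod f X \<notin> P"
    using prod_notin_prime_ideal[OF P A X] f unfolding denominators_def by blast
  ultimately show False using assms(4) by blast
qed

definition extends_to_unit_ideal :: "'k::field set \<Rightarrow> 'k set \<Rightarrow> bool" where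
  "extends_to_unit_ideal P B \<longleftrightarrow>
     (\<exists>(m::nat) c \<beta>. (\<forall>k<m. c k \<in> P \<and> \<beta> k \<in> B) \<and> (\<Sum>k<m. c k * \<beta> k) = 1)"

lemma extends_to_unit_ideal_mono:
  "extends_to_unit_ideal P B \<Longrightarrow> P \<subseteq> P' \<Longrightarrow> extends_to_unit_ideal P' B"
  unfolding extends_to_unit_ideal_def by blast

lemma sum_mem_ideal:
  assumes "ideal_of B Q" "\<forall>k<(m::nat). c k \<in> Q \<and> \<beta> k \<in> B"
  shows "(\<Sum>k<m. c k * \<beta> k) \<in> Q"
  using assms(2)
proof (induction m)
  case 0
  then show ?case using ideal_0[OF assms(1)] by simp
next
  case (Suc m)
  then have "(\<Sum>k<m. c k * \<beta> k) \<in> Q" "c m * \<beta> m \<in> Q"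
    using ideal_mult_right[OF assms(1)] by auto
  then show ?case using ideal_add[OF assms(1)] by simp
qed

lemma not_extends_to_unit_ideal:
  assumes "prime_ideal_of B Q" "P \<subseteq> Q"
  shows "\<not> extends_to_unit_ideal P B"
proof
  assume "extends_to_unit_ideal P B"
  then obtain m :: nat and c \<beta> where "\<forall>k<m. c k \<in> P \<and> \<beta> k \<in> B" "(\<Sum>k<m. c k * \<beta> k) = 1"
    unfolding extends_to_unit_ideal_def by blast
  then have "1 \<in> Q" using sum_mem_ideal[OF prime_ideal_ideal[OF assms(1)], of m c \<beta>] assms(2) by auto
  then show False using prime_ideal_one_notin[OF assms(1)] by blast
qed

text \<open>Flatness trivialises the relation p * 1 - q * b = 0 for b = p / q; the trivialisation
  writes 1 as a B-combination of elements c with c b \<in> A.\<close>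
lemma extends_to_unit_ideal_denominators:
  assumes A: "subring A" and ff: "is_fraction_field_of A" and B: "subring B"
    and flat: "flat_over A B" and b: "b \<in> B"
  shows "extends_to_unit_ideal (denominators A {b}) B"
proof -
  obtain p q where pq: "p \<in> A" "q \<in> A" "q \<noteq> 0" "b = p / q"
    using ff unfolding is_fraction_field_of_def by blast
  define a where "a = (\<lambda>i::nat. if i = 0 then p else - q)"
  define bs where "bs = (\<lambda>i::nat. if i = 0 then 1 else b)"
  have "\<forall>i<2. a i \<in> A \<and> bs i \<in> B"
    using pq b subring_uminus[OF A] subring_1[OF B] unfolding a_def bs_def by auto
  moreover have "(\<Sum>i<2. a i * bs i) = 0"
    using pq by (simp add: a_def bs_def numeral_2_eq_2)
  ultimately obtain m :: nat and c x where cx: "\<forall>j<m. c j \<in> B" "\<forall>i<2. \<forall>j<m. x i j \<in> A"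
      "\<forall>i<2. bs i = (\<Sum>j<m. x i j * c j)" "\<forall>j<m. (\<Sum>i<2. a i * x i j) = 0"
    using flat[unfolded flat_over_def, rule_format, of 2 a bs] by blast
  have "x 0 j \<in> denominators A {b}" if j: "j < m" for j
  proof -
    have "p * x 0 j = q * x 1 j"
      using cx(4) j by (simp add: a_def numeral_2_eq_2)
    then have "x 0 j * b = x 1 j"
      using pq(3,4) by (metis nonzero_mult_div_cancel_left times_divide_eq_right mult.commute)
    then show ?thesis using cx(2) j unfolding denominators_def by auto
  qed
  moreover have "(\<Sum>j<m. x 0 j * c j) = 1" using cx(3)[rule_format, of 0] by (simp add: bs_def)
  ultimately show ?thesis using cx(1) unfolding extends_to_unit_ideal_def by blast
qed

text \<open>The ring A[1/d] inside the fraction field (the whole field when d = 0).\<close>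
definition away :: "'k::field set \<Rightarrow> 'k \<Rightarrow> 'k set" where
  "away A d = {y. \<exists>n. d ^ n * y \<in> A}"

lemma subring_away:
  assumes A: "subring A" and d: "d \<in> A"
  shows "subring (away A d)"
  unfolding subring_def away_def
proof (intro conjI ballI; clarify)
  show "\<exists>n. d ^ n * 0 \<in> A" using subring_0[OF A] by simp
  show "\<exists>n. d ^ n * 1 \<in> A" using subring_1[OF A] by (metis mult_1_right power_0)
next
  fix y z m n assume y: "d ^ m * y \<in> A" and z: "d ^ n * z \<in> A"
  have dn: "d ^ m \<in> A" "d ^ n \<in> A" using subring_power[OF A d] by auto
  have "d ^ (m + n) * (y + z) = d ^ n * (d ^ m * y) + d ^ m * (d ^ n * z)"
    by (simp add: power_add algebra_simps)
  then show "\<exists>k. d ^ k * (y + z) \<in> A" using A dn y z by (metis subring_add subring_mult)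
  have "d ^ (m + n) * (y * z) = (d ^ m * y) * (d ^ n * z)"
    by (simp add: power_add algebra_simps)
  then show "\<exists>k. d ^ k * (y * z) \<in> A" using A y z by (metis subring_mult)
  show "\<exists>k. d ^ k * - y \<in> A" using subring_uminus[OF A y] by (metis mult_minus_right)
qed

lemma generated_subset_away:
  assumes A: "subring A" and B: "B = \<Inter>{C. subring C \<and> A \<subseteq> C \<and> X \<subseteq> C}"
    and d: "d \<in> denominators A X"
  shows "B \<subseteq> away A d"
proof -
  have "d \<in> A" using d unfolding denominators_def by blast
  moreover have "A \<subseteq> away A d" unfolding away_def by (force intro: exI[of _ 0])
  moreover have "X \<subseteq> away A d"
    using d unfolding away_def denominators_def by (force intro: exI[of _ 1])
  ultimately show ?thesis using subring_away[OF A] B by blast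
qed

lemma power_mult_sum_mem_ideal:
  assumes A: "subring A" and P: "ideal_of A P" and d: "d \<in> A"
    and dB: "B \<subseteq> away A d" and c\<beta>: "\<forall>k<(m::nat). c k \<in> P \<and> \<beta> k \<in> B"
  shows "\<exists>n. d ^ n * (\<Sum>k<m. c k * \<beta> k) \<in> P"
  using c\<beta>
proof (induction m)
  case 0
  then show ?case using ideal_0[OF P] by auto
next
  case (Suc m)
  then obtain n where n: "d ^ n * (\<Sum>k<m. c k * \<beta> k) \<in> P" by auto
  obtain n' where n': "d ^ n' * \<beta> m \<in> A" using dB Suc.prems unfolding away_def by auto
  have "d ^ (n + n') * (\<Sum>k<Suc m. c k * \<beta> k)
      = d ^ n' * (d ^ n * (\<Sum>k<m. c k * \<beta> k)) + d ^ n * ((d ^ n' * \<beta> m) * c m)"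
    by (simp add: power_add algebra_simps)
  also have "\<dots> \<in> P"
    using Suc.prems ideal_add[OF P ideal_mult[OF P subring_power[OF A d] n]
        ideal_mult[OF P subring_power[OF A d] ideal_mult[OF P n']]] by simp
  finally show ?case by blast
qed

lemma mem_prime_ideal_if_extends_to_unit_ideal:
  assumes A: "subring A" and P: "prime_ideal_of A P" and ext: "extends_to_unit_ideal P B"
    and d: "d \<in> A" and dB: "B \<subseteq> away A d"
  shows "d \<in> P"
proof -
  obtain m :: nat and c \<beta> where "\<forall>k<m. c k \<in> P \<and> \<beta> k \<in> B" "(\<Sum>k<m. c k * \<beta> k) = 1"
    using ext unfolding extends_to_unit_ideal_def by blast
  then obtain n where "d ^ n \<in> P"
    using power_mult_sum_mem_ideal[OF A prime_ideal_ideal[OF P] d dB] by (metis mult_1_right)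
  then show ?thesis using prime_ideal_power_dest[OF P A d] by blast
qed

lemma extends_to_unit_ideal_iff_denominators_subset:
  assumes A: "subring A" and ff: "is_fraction_field_of A" and B: "subring B"
    and flat: "flat_over A B" and X: "finite X" "X \<subseteq> B"
    and gen: "B = \<Inter>{C. subring C \<and> A \<subseteq> C \<and> X \<subseteq> C}" and P: "prime_ideal_of A P"
  shows "extends_to_unit_ideal P B \<longleftrightarrow> denominators A X \<subseteq> P"
proof
  assume "extends_to_unit_ideal P B"
  then show "denominators A X \<subseteq> P"
    using mem_prime_ideal_if_extends_to_unit_ideal[OF A P] generated_subset_away[OF A gen]
    unfolding denominators_def by blast
next
  assume "denominators A X \<subseteq> P"
  then obtain x where "x \<in> X" "denominators A {x} \<subseteq> P"
    using denominators_subset_prime_ideal[OF A P X(1)] by blast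
  then show "extends_to_unit_ideal P B"
    using extends_to_unit_ideal_denominators[OF A ff B flat] extends_to_unit_ideal_mono X(2) by blast
qed

section \<open>Overrings of one-dimensional domains\<close>

lemma prime_ideal_zero: "subring A \<Longrightarrow> prime_ideal_of A {0}"
  unfolding prime_ideal_of_def ideal_of_def by (auto dest: subring_0 subring_1)

lemma krull_dim_one_prime_ideal_eq:
  assumes K: "krull_dim_eq A 1" and A: "subring A"
    and P: "prime_ideal_of A P" and Q: "prime_ideal_of A Q" and QP: "Q \<subseteq> P"
    and t: "t \<in> Q" "t \<noteq> 0"
  shows "Q = P"
proof (rule ccontr)
  assume "Q \<noteq> P"
  define C where "C = (\<lambda>i::nat. if i = 0 then {0} else if i = 1 then Q else P)"
  have "{0} \<subset> Q" using t ideal_0[OF prime_ideal_ideal[OF Q]] by blast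
  then have "\<forall>i<2. C i \<subset> C (Suc i)"
    using QP \<open>Q \<noteq> P\<close> by (auto simp: C_def less_Suc_eq numeral_2_eq_2)
  moreover have "\<forall>i\<le>2. prime_ideal_of A (C i)"
    using prime_ideal_zero[OF A] P Q by (auto simp: C_def le_Suc_eq numeral_2_eq_2)
  ultimately have "prime_chain_of_length A 2" unfolding prime_chain_of_length_def by blast
  then show False using K unfolding krull_dim_eq_def by auto
qed

text \<open>A prime of B over tB avoiding A - P contracts to a nonzero prime inside P, hence to P
  itself by dimension one; but no prime of B contains P when PB = B.\<close>
lemma exists_multiple_outside_prime_ideal:
  assumes A: "subring A" and B: "subring B" and AB: "A \<subseteq> B" and K: "krull_dim_eq A 1"
    and P: "prime_ideal_of A P" and ext: "extends_to_unit_ideal P B"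
    and t: "t \<in> A" "t \<noteq> 0"
  obtains \<beta> where "\<beta> \<in> B" "\<beta> * t \<in> A - P"
proof -
  have tB: "t \<in> B" using t(1) AB by blast
  have "principal_ideal B t \<inter> (A - P) \<noteq> {}"
  proof
    assume disjoint: "principal_ideal B t \<inter> (A - P) = {}"
    have "A - P \<subseteq> B" "1 \<in> A - P"
      using AB subring_1[OF A] prime_ideal_one_notin[OF P] by auto
    moreover have "\<forall>x\<in>A - P. \<forall>y\<in>A - P. x * y \<in> A - P"
      using subring_mult[OF A] prime_ideal_mult_dest[OF P] by blast
    ultimately obtain Q where Q: "prime_ideal_of B Q" "principal_ideal B t \<subseteq> Q" "Q \<inter> (A - P) = {}"
      by (rule prime_ideal_avoiding[OF B ideal_of_principal_ideal[OF B tB] _ _ _ disjoint])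
    have "prime_ideal_of A (Q \<inter> A)" using prime_ideal_of_Int[OF Q(1) A AB] .
    moreover have "t \<in> Q \<inter> A" using Q(2) mem_principal_ideal[OF B] t(1) by blast
    ultimately have "Q \<inter> A = P"
      using krull_dim_one_prime_ideal_eq[OF K A P] Q(3) t(2) by blast
    then show False using not_extends_to_unit_ideal[OF Q(1)] ext by blast
  qed
  then show thesis using that unfolding principal_ideal_def by blast
qed

lemma exists_fraction_comaximal:
  assumes A: "subring A" and B: "subring B" and AB: "A \<subseteq> B" and K: "krull_dim_eq A 1"
    and I: "ideal_of A I"
    and ext: "\<And>P. prime_ideal_of A P \<Longrightarrow> I \<subseteq> P \<Longrightarrow> extends_to_unit_ideal P B"
    and t: "t \<in> A" "t \<noteq> 0"
  obtains l j where "l \<in> A" "l / t \<in> B" "j \<in> I" "l + j = 1"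
proof -
  let ?L = "principal_ideal B t \<inter> A"
  have L: "ideal_of A ?L"
    using t(1) AB ideal_of_Int[OF ideal_of_principal_ideal[OF B] A AB] by blast
  have "1 \<in> ideal_sum ?L I"
  proof (rule ccontr)
    assume "1 \<notin> ideal_sum ?L I"
    then obtain P where P: "prime_ideal_of A P" "ideal_sum ?L I \<subseteq> P"
      using proper_ideal_in_prime_ideal[OF A ideal_of_ideal_sum[OF L I A]] by blast
    then have "?L \<subseteq> P" "I \<subseteq> P"
      using ideal_sum_subset_left[OF I] ideal_sum_subset_right[OF L] by blast+
    moreover obtain \<beta> where "\<beta> \<in> B" "\<beta> * t \<in> A - P"
      using exists_multiple_outside_prime_ideal[OF A B AB K P(1) ext[OF P(1) \<open>I \<subseteq> P\<close>] t] .
    ultimately show False unfolding principal_ideal_def by blast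
  qed
  then obtain l j where l: "l \<in> ?L" and "j \<in> I" "1 = l + j" unfolding ideal_sum_def by blast
  moreover obtain \<beta> where "\<beta> \<in> B" "l = \<beta> * t" using l unfolding principal_ideal_def by blast
  ultimately show thesis using that[of l j] l t(2) by auto
qed

lemma mem_if_denominator_outside_extending_primes:
  assumes A: "subring A" and ff: "is_fraction_field_of A" and B: "subring B"
    and flat: "flat_over A B" and b: "b \<in> B" and l: "l \<in> denominators A {b}"
    and outside: "\<And>P. prime_ideal_of A P \<Longrightarrow> extends_to_unit_ideal P B \<Longrightarrow> l \<notin> P"
  shows "b \<in> A"
proof (rule ccontr)
  assume "b \<notin> A"
  then have "1 \<notin> denominators A {b}" using one_mem_denominators_iff[OF A] by blast
  then obtain P where P: "prime_ideal_of A P" "denominators A {b} \<subseteq> P"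
    by (rule proper_ideal_in_prime_ideal[OF A ideal_of_denominators[OF A]])
  then have "extends_to_unit_ideal P B"
    using extends_to_unit_ideal_mono[OF extends_to_unit_ideal_denominators[OF A ff B flat b]] by blast
  then show False using outside[OF P(1)] P(2) l by blast
qed

lemma subset_away_if_mem_extending_primes:
  assumes A: "subring A" and ff: "is_fraction_field_of A" and B: "subring B"
    and flat: "flat_over A B" and u: "u \<in> A"
    and inside: "\<And>P. prime_ideal_of A P \<Longrightarrow> extends_to_unit_ideal P B \<Longrightarrow> u \<in> P"
  shows "B \<subseteq> away A u"
proof
  fix b assume b: "b \<in> B"
  let ?U = "range (\<lambda>n::nat. u ^ n)"
  show "b \<in> away A u"
  proof (rule ccontr)
    assume "b \<notin> away A u"
    then have disjoint: "denominators A {b} \<inter> ?U = {}" unfolding away_def denominators_def by auto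
    have "?U \<subseteq> A" using subring_power[OF A u] by blast
    moreover have "1 \<in> ?U" by (metis power_0 rangeI)
    moreover have "\<forall>x\<in>?U. \<forall>y\<in>?U. x * y \<in> ?U" by (auto simp: power_add[symmetric])
    ultimately obtain P where P: "prime_ideal_of A P" "denominators A {b} \<subseteq> P" "P \<inter> ?U = {}"
      using disjoint by (rule prime_ideal_avoiding[OF A ideal_of_denominators[OF A]])
    then have "extends_to_unit_ideal P B"
      using extends_to_unit_ideal_mono[OF extends_to_unit_ideal_denominators[OF A ff B flat b]] by blast
    then have "u \<in> P" using inside P(1) by blast
    moreover have "u \<in> ?U" by (metis power_one_right rangeI)
    ultimately show False using P(3) by blast
  qed
qed

lemma is_localization_if_subset_away:
  assumes A: "subring A" and B: "subring B" and AB: "A \<subseteq> B"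
    and u: "u \<in> A" "v \<in> B" "u * v = 1" and away: "B \<subseteq> away A u"
  shows "is_localization A B"
  unfolding is_localization_def
proof (intro exI conjI)
  let ?U = "range (\<lambda>n::nat. u ^ n)"
  have "u \<noteq> 0" using u(3) by auto
  then show "?U \<subseteq> A - {0}" using subring_power[OF A u(1)] by auto
  show "1 \<in> ?U" by (metis power_0 rangeI)
  show "\<forall>s\<in>?U. \<forall>t\<in>?U. s * t \<in> ?U" by (auto simp: power_add[symmetric])
  show "B = {a / s | a s. a \<in> A \<and> s \<in> ?U}"
  proof (intro equalityI subsetI)
    fix b assume "b \<in> B"
    then obtain n where "u ^ n * b \<in> A" using away unfolding away_def by blast
    moreover have "b = u ^ n * b / u ^ n" using \<open>u \<noteq> 0\<close> by simp
    ultimately show "b \<in> {a / s | a s. a \<in> A \<and> s \<in> ?U}" by blast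
  next
    fix y assume "y \<in> {a / s | a s. a \<in> A \<and> s \<in> ?U}"
    then obtain a n where "y = a / u ^ n" "a \<in> A" by blast
    moreover have "inverse u = v" using u(3) by (rule inverse_unique)
    then have "a / u ^ n = a * v ^ n" by (simp add: divide_inverse flip: power_inverse)
    moreover have "a * v ^ n \<in> B" using subring_mult[OF B] subring_power[OF B u(2)] AB \<open>a \<in> A\<close> by blast
    ultimately show "y \<in> B" by simp
  qed
qed

lemma is_localization_if_unit_clears_fraction:
  assumes A: "subring A" and ff: "is_fraction_field_of A" and B: "subring B" and AB: "A \<subseteq> B"
    and flat: "flat_over A B" and I: "ideal_of A I"
    and extends_iff: "\<And>P. prime_ideal_of A P \<Longrightarrow> extends_to_unit_ideal P B \<longleftrightarrow> I \<subseteq> P"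
    and t: "t \<in> I" "t \<noteq> 0" and lj: "l \<in> A" "j \<in> I" "l + j = 1"
    and u: "u * (l / t) \<in> A" "u \<in> B" "v \<in> B" "u * v = 1"
  shows "is_localization A B"
proof -
  have tA: "t \<in> A" using t(1) ideal_subset[OF I] by blast
  have lu: "l * u = u * (l / t) * t" using t(2) by simp
  have l_outside: "l \<notin> P" if P: "prime_ideal_of A P" "extends_to_unit_ideal P B" for P
  proof
    assume "l \<in> P"
    moreover have "j \<in> P" using lj(2) extends_iff[OF P(1)] P(2) by blast
    ultimately have "l + j \<in> P" by (rule ideal_add[OF prime_ideal_ideal[OF P(1)]])
    then show False using lj(3) prime_ideal_one_notin[OF P(1)] by simp
  qed
  have "l * u \<in> A" unfolding lu by (rule subring_mult[OF A u(1) tA])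
  then have "u \<in> A"
    using mem_if_denominator_outside_extending_primes[OF A ff B flat u(2) _ l_outside] lj(1)
    unfolding denominators_def by simp
  moreover have "u \<in> P" if P: "prime_ideal_of A P" "extends_to_unit_ideal P B" for P
  proof -
    have "t \<in> P" using t(1) extends_iff[OF P(1)] P(2) by blast
    then have "l * u \<in> P" unfolding lu by (rule ideal_mult[OF prime_ideal_ideal[OF P(1)] u(1)])
    then show "u \<in> P" using prime_ideal_mult_dest[OF P(1) lj(1) \<open>u \<in> A\<close>] l_outside[OF P] by blast
  qed
  ultimately have "B \<subseteq> away A u" using subset_away_if_mem_extending_primes[OF A ff B flat] by blast
  then show ?thesis using is_localization_if_subset_away[OF A B AB \<open>u \<in> A\<close> u(3,4)] by blast
qed

theorem theorem4p22:
  fixes A B :: "'k::field set"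
  assumes "subring A"
    and "is_fraction_field_of A"
    and "krull_dim_eq A 1"
    and "overring A B"
    and "fin_gen_algebra A B"
    and "flat_over A B"
    and "well_centered A B"
  shows "is_localization A B"
proof -
  note A = assms(1) and ff = assms(2) and K = assms(3) and flat = assms(6)
  have B: "subring B" and AB: "A \<subseteq> B" using assms(4) unfolding overring_def by auto
  obtain X where X: "finite X" "X \<subseteq> B" and gen: "B = \<Inter>{C. subring C \<and> A \<subseteq> C \<and> X \<subseteq> C}"
    using assms(5) unfolding fin_gen_algebra_def by blast
  note I = ideal_of_denominators[OF A, of X]
  note extends_iff = extends_to_unit_ideal_iff_denominators_subset[OF A ff B flat X gen]
  obtain t where t: "t \<in> denominators A X" "t \<noteq> 0"
    using exists_nonzero_denominator[OF A ff X(1)] .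
  have "t \<in> A" using t(1) unfolding denominators_def by blast
  with extends_iff obtain l j where l: "l \<in> A" "l / t \<in> B" and j: "j \<in> denominators A X" "l + j = 1"
    using exists_fraction_comaximal[OF A B AB K I _ _ t(2)] by blast
  obtain u v where "u * (l / t) \<in> A" "u \<in> B" "v \<in> B" "u * v = 1"
    using assms(7) l(2) unfolding well_centered_def unit_of_def by blast
  then show ?thesis
    using is_localization_if_unit_clears_fraction[OF A ff B AB flat I extends_iff t l(1) j] by blast
qed

end
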